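(* Let $X,Y$ be Banach spaces, let $S$ be a subset of $X$ (with the metric induced by the norm), let $K\ge0$, and let $f:S\to Y$ be a coarse quotient map with constant $K$ that is coarse Lipschitz. Then for all $0<t\le1$, $$\bar{\beta}_X\left(\frac{t}{48\,{\rm Lip}_\infty(f)\,c_\infty(f)}\right)\le\frac{3}{2}\bar{\rho}_Y(t).$$
   Context: All Banach spaces are real and infinite-dimensional; $B_X$, $S_X$ are the closed unit ball and unit sphere; $B_Z(z,r)$ is the closed ball of radius $r$ about $z$ in a metric space $Z$; for $A\subseteq Y$, $A^K:=\{y: \|y-a\|\le K\text{ for some }a\in A\}$. $\bar{\rho}_Y(t):=\sup_{y\in S_Y}\inf_{\dim(Y/Z)<\infty}\sup_{z\in S_Z}\|y+tz\|-1$ (infimum over finite-codimensional subspaces). The $(\beta)$-modulus is $\bar{\beta}_X(t)=1-\sup\{\inf_{n\ge1}\|x-x_n\|/2 : x,x_n\in B_X,\ {\rm sep}(\{x_n\})\ge t\}$, where ${\rm sep}(\{x_n\}_{n\ge1}):=\inf_{i\ne j}\|x_i-x_j\|$. For $f:S\to Y$: $\omega_f(t):=\sup\{\|f(x)-f(y)\|: x,y\in S,\ \|x-y\|\le t\}$; $f$ is coarsely continuous if $\omega_f(t)<\infty$ for all $t>0$; $f$ is co-coarsely continuous with constant $K$ if for every $d>K$ there is $\delta(d)>0$ with $f(B_S(x,\delta))^K\supseteq B_Y(f(x),d)$ for all $x\in S$; $f$ is a coarse quotient map with constant $K$ if both hold. ${\rm Lip}_s(f):=\sup\{\|f(x)-f(y)\|/\|x-y\|: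 \|x-y\|\ge s\}$, ${\rm Lip}_\infty(f):=\inf_{s>0}{\rm Lip}_s(f)$, and $f$ is coarse Lipschitz if ${\rm Lip}_s(f)<\infty$ for some $s>0$. For $d>K$, $c_d$ is the infimum of all $c>0$ such that $f(B_S(x,cr))^K\supseteq B_Y(f(x),r)$ for all $x\in S$ and all $r\ge d$; $c_\infty(f):=\inf_{d>K}c_d=\lim_{d\to\infty}c_d$. *)

theory Defs
  imports "HOL-Analysis.Analysis"
begin

definition infinite_dimensional :: "'a::real_vector itself \<Rightarrow> bool" where
  "infinite_dimensional TYPE('a) \<longleftrightarrow> \<not> (\<exists>B::'a set. finite B \<and> span B = UNIV)"

definition finite_codim :: "'a::real_vector set \<Rightarrow> bool" where
  "finite_codim Z \<longleftrightarrow> subspace Z \<and> (\<exists>F. finite F \<and> span (Z \<union> F) = UNIV)"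

definition rho_bar :: "'a::real_normed_vector itself \<Rightarrow> real \<Rightarrow> real" where
  "rho_bar TYPE('a) t =
     (SUP y\<in>sphere (0::'a) 1. INF Z\<in>{Z. finite_codim Z}.
        SUP z\<in>sphere 0 1 \<inter> Z. norm (y + t *\<^sub>R z) - 1)"

definition sep :: "(nat \<Rightarrow> 'a::real_normed_vector) \<Rightarrow> real" where
  "sep xs = (INF p\<in>{(i,j). i \<noteq> j}. norm (xs (fst p) - xs (snd p)))"

definition beta_bar :: "'a::real_normed_vector itself \<Rightarrow> real \<Rightarrow> real" where
  "beta_bar TYPE('a) t = 1 - Sup {(INF n. norm (x - xs n) / 2) | (x::'a) xs.
       x \<in> cball 0 1 \<and> (\<forall>n. xs n \<in> cball 0 1) \<and> sep xs \<ge> t}"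

definition ball_in :: "'a::metric_space set \<Rightarrow> 'a \<Rightarrow> real \<Rightarrow> 'a set" where
  "ball_in S x r = {s\<in>S. dist s x \<le> r}"

definition enlarge :: "'a::metric_space set \<Rightarrow> real \<Rightarrow> 'a set" where
  "enlarge A K = {y. \<exists>a\<in>A. dist y a \<le> K}"

definition omega :: "('a::metric_space \<Rightarrow> 'b::metric_space) \<Rightarrow> 'a set \<Rightarrow> real \<Rightarrow> ereal" where
  "omega f S t = (SUP p\<in>{(x,y). x \<in> S \<and> y \<in> S \<and> dist x y \<le> t}. ereal (dist (f (fst p)) (f (snd p))))"

definition coarsely_continuous :: "('a::metric_space \<Rightarrow> 'b::metric_space) \<Rightarrow> 'a set \<Rightarrow> bool" where
  "coarsely_continuous f S \<longleftrightarrow> (\<forall>t>0. omega f S t < \<infinity>)"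

definition co_coarsely_continuous :: "('a::metric_space \<Rightarrow> 'b::metric_space) \<Rightarrow> 'a set \<Rightarrow> real \<Rightarrow> bool" where
  "co_coarsely_continuous f S K \<longleftrightarrow>
     (\<forall>d>K. \<exists>\<delta>>0. \<forall>x\<in>S. cball (f x) d \<subseteq> enlarge (f ` ball_in S x \<delta>) K)"

definition coarse_quotient :: "('a::metric_space \<Rightarrow> 'b::metric_space) \<Rightarrow> 'a set \<Rightarrow> real \<Rightarrow> bool" where
  "coarse_quotient f S K \<longleftrightarrow> coarsely_continuous f S \<and> co_coarsely_continuous f S K"

definition Lip_s :: "('a::metric_space \<Rightarrow> 'b::metric_space) \<Rightarrow> 'a set \<Rightarrow> real \<Rightarrow> ereal" where
  "Lip_s f S s = (SUP p\<in>{(x,y). x \<in> S \<and> y \<in> S \<and> dist x y \<ge> s}.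
      ereal (dist (f (fst p)) (f (snd p)) / dist (fst p) (snd p)))"

definition Lip_inf :: "('a::metric_space \<Rightarrow> 'b::metric_space) \<Rightarrow> 'a set \<Rightarrow> ereal" where
  "Lip_inf f S = (INF s\<in>{0<..}. Lip_s f S s)"

definition coarse_lipschitz :: "('a::metric_space \<Rightarrow> 'b::metric_space) \<Rightarrow> 'a set \<Rightarrow> bool" where
  "coarse_lipschitz f S \<longleftrightarrow> (\<exists>s>0. Lip_s f S s < \<infinity>)"

definition c_d :: "('a::metric_space \<Rightarrow> 'b::metric_space) \<Rightarrow> 'a set \<Rightarrow> real \<Rightarrow> real \<Rightarrow> ereal" where
  "c_d f S K d = Inf {ereal c | c. c > 0 \<and>
      (\<forall>x\<in>S. \<forall>r\<ge>d. cball (f x) r \<subseteq> enlarge (f ` ball_in S x (c * r)) K)}"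

definition c_inf :: "('a::metric_space \<Rightarrow> 'b::metric_space) \<Rightarrow> 'a set \<Rightarrow> real \<Rightarrow> ereal" where
  "c_inf f S K = (INF d\<in>{K<..}. c_d f S K d)"

end

theory Submission
  imports Defs
begin

(*
  Let c = c_inf f S K, L = Lip_inf f S and s = t / (48 L c), and suppose beta_bar s > rho_bar t.
  A point y at distance r = b (3 + rho) from f x is lifted through a fork: a point q at distance
  b (1 + rho) from f x towards y, and points p_n = q + b (u + t z_n), where u is the direction of
  y - f x and the z_n are 1/2-separated unit vectors (Riesz's lemma in a finite-codimensional
  subspace) with norm (u +- t z_n) <= 1 + rho.  Each p_n lies within b (1 + rho) of q and of y.
  Lifting q and then all p_n gives points of S that, by the large-scale Lipschitz bound, are
  separated at scale s relative to the lifting radius R ~ c b (1 + rho); so by the definition of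
  beta_bar one of them lies within 2 R (1 - beta_bar s) of the lift of x, and lifting y from it
  costs R (3 - 2 beta_bar s) in total.  Since (1 + rho)(3 - 2 beta) < 3 + rho for beta > rho, this
  beats the lifting constant c, contradicting its minimality.
*)

lemma infdist_span_scaled_le:
  fixes a :: "'a::real_normed_vector"
  assumes "x \<in> span B"
  shows "\<bar>k\<bar> * infdist a (span B) \<le> norm (x + k *\<^sub>R a)"
proof (cases "k = 0")
  case False
  have "- (x /\<^sub>R k) \<in> span B" using assms by (simp add: span_neg span_scale)
  then have "infdist a (span B) \<le> norm (a + x /\<^sub>R k)"
    using infdist_le by (fastforce simp: dist_norm)
  then have "\<bar>k\<bar> * infdist a (span B) \<le> norm (k *\<^sub>R (a + x /\<^sub>R k))"
    by (simp add: mult_left_mono)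
  also have "k *\<^sub>R (a + x /\<^sub>R k) = x + k *\<^sub>R a" using False by (simp add: algebra_simps)
  finally show ?thesis .
qed simp

lemma Cauchy_span_insert_coefficients:
  fixes a :: "'a::real_normed_vector"
  assumes "closed (span B)" "a \<notin> span B" "\<And>n. X n - k n *\<^sub>R a \<in> span B" "Cauchy X"
  shows "Cauchy k"
proof (rule metric_CauchyI)
  define \<delta> where "\<delta> = infdist a (span B)"
  have "\<delta> > 0" unfolding \<delta>_def
    using infdist_pos_not_in_closed[OF assms(1) _ assms(2)] span_zero by blast
  have coeff: "\<bar>k m - k n\<bar> * \<delta> \<le> dist (X m) (X n)" for m n
  proof -
    have "(X m - k m *\<^sub>R a) - (X n - k n *\<^sub>R a) \<in> span B" by (intro span_diff assms(3))
    from infdist_span_scaled_le[OF this, of "k m - k n" a]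
    show ?thesis unfolding \<delta>_def dist_norm by (simp add: algebra_simps)
  qed
  fix e :: real assume "e > 0"
  with \<open>\<delta> > 0\<close> have "e * \<delta> > 0" by simp
  with \<open>Cauchy X\<close> obtain M where "\<forall>m\<ge>M. \<forall>n\<ge>M. dist (X m) (X n) < e * \<delta>"
    using metric_CauchyD by blast
  then have "\<forall>m\<ge>M. \<forall>n\<ge>M. \<bar>k m - k n\<bar> * \<delta> < e * \<delta>"
    using coeff order.strict_trans1 by blast
  then show "\<exists>M. \<forall>m\<ge>M. \<forall>n\<ge>M. dist (k m) (k n) < e"
    using \<open>\<delta> > 0\<close> by (auto simp: dist_real_def)
qed

text \<open>The library proves closedness of spans only in Euclidean spaces.\<close>

lemma closed_span_finite:
  fixes B :: "'a::real_normed_vector set"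
  assumes "finite B"
  shows "closed (span B)"
  using assms
proof (induction B rule: finite_induct)
  case (insert a B)
  show ?case
  proof (cases "a \<in> span B")
    case True
    then show ?thesis using insert.IH by (simp add: span_redundant)
  next
    case False
    show ?thesis unfolding closed_sequential_limits
    proof (intro allI impI, elim conjE)
      fix X l assume X: "\<forall>n. X n \<in> span (insert a B)" and "X \<longlonglongrightarrow> l"
      have "\<forall>n. \<exists>k. X n - k *\<^sub>R a \<in> span B" using X span_breakdown_eq by blast
      then obtain k where k: "\<And>n. X n - k n *\<^sub>R a \<in> span B" by metis
      have "Cauchy k"
        by (rule Cauchy_span_insert_coefficients[OF insert.IH False k LIMSEQ_imp_Cauchy[OF \<open>X \<longlonglongrightarrow> l\<close>]])
      then obtain k0 where "k \<longlonglongrightarrow> k0" using Cauchy_convergent_iff convergent_def by blast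
      then have lim: "(\<lambda>n. X n - k n *\<^sub>R a) \<longlonglongrightarrow> l - k0 *\<^sub>R a"
        by (intro tendsto_intros \<open>X \<longlonglongrightarrow> l\<close>)
      have "\<forall>Y l. (\<forall>n. Y n \<in> span B) \<and> Y \<longlonglongrightarrow> l \<longrightarrow> l \<in> span B"
        using insert.IH by (simp add: closed_sequential_limits)
      from this[rule_format, OF conjI[OF allI[OF k] lim]]
      have "l - k0 *\<^sub>R a \<in> span B" .
      then show "l \<in> span (insert a B)" using span_breakdown_eq by blast
    qed
  qed
qed simp

lemma riesz_unit_vector:
  fixes Z :: "'a::real_normed_vector set"
  assumes "subspace Z" "finite F" "F \<subseteq> Z" "\<not> Z \<subseteq> span F"
  shows "\<exists>z\<in>Z. norm z = 1 \<and> (\<forall>v\<in>span F. 1/2 \<le> norm (z - v))"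
proof -
  obtain w where w: "w \<in> Z" "w \<notin> span F" using assms(4) by blast
  define \<delta> where "\<delta> = infdist w (span F)"
  have "\<delta> > 0" unfolding \<delta>_def
    using infdist_pos_not_in_closed[OF closed_span_finite[OF assms(2)] _ w(2)] span_zero by blast
  moreover have "span F \<noteq> {}" using span_zero by blast
  ultimately have "(INF v\<in>span F. dist w v) < 2 * \<delta>"
    using infdist_notempty[of "span F" w] unfolding \<delta>_def by fastforce
  with \<open>span F \<noteq> {}\<close> obtain v0 where v0: "v0 \<in> span F" "norm (w - v0) < 2 * \<delta>"
    by (subst (asm) cINF_less_iff) (auto simp: dist_norm intro: bdd_belowI[of _ 0])
  define n where "n = norm (w - v0)"
  have "n > 0" using v0 w unfolding n_def by auto
  define z where "z = (w - v0) /\<^sub>R n"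
  have "span F \<subseteq> Z" using assms by (simp add: span_minimal)
  then have "z \<in> Z" unfolding z_def using w v0 assms(1)
    by (meson subsetD subspace_diff subspace_scale)
  moreover have "norm z = 1" unfolding z_def n_def using \<open>n > 0\<close> n_def by simp
  moreover have "1/2 \<le> norm (z - v)" if "v \<in> span F" for v
  proof -
    have "v0 + n *\<^sub>R v \<in> span F" using that v0 by (simp add: span_add span_scale)
    then have "\<delta> \<le> dist w (v0 + n *\<^sub>R v)" unfolding \<delta>_def by (rule infdist_le)
    also have "\<dots> = norm (n *\<^sub>R (z - v))"
      unfolding z_def dist_norm using \<open>n > 0\<close> by (simp add: algebra_simps)
    also have "\<dots> = n * norm (z - v)" using \<open>n > 0\<close> by simp
    finally have "n * (1/2) \<le> n * norm (z - v)" using v0(2) unfolding n_def by linarith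
    then show ?thesis using \<open>n > 0\<close> by simp
  qed
  ultimately show ?thesis by blast
qed

lemma sequence_avoiding_finite_subsets:
  assumes "\<And>F. finite F \<Longrightarrow> F \<subseteq> A \<Longrightarrow> \<exists>a\<in>A. P F a"
  shows "\<exists>x::nat \<Rightarrow> 'a. \<forall>n. x n \<in> A \<and> P (x ` {..<n}) (x n)"
proof -
  define pick where "pick F = (SOME a. a \<in> A \<and> P F a)" for F
  have pick: "pick F \<in> A \<and> P F (pick F)" if "finite F" "F \<subseteq> A" for F
  proof -
    have "\<exists>a. a \<in> A \<and> P F a" using assms[OF that] by blast
    then show ?thesis unfolding pick_def by (rule someI_ex)
  qed
  define T where "T n = ((\<lambda>F. insert (pick F) F) ^^ n) {}" for n
  have T_Suc: "T (Suc n) = insert (pick (T n)) (T n)" for n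
    unfolding T_def by simp
  define x where "x n = pick (T n)" for n
  have T: "T n = x ` {..<n}" for n
  proof (induction n)
    case 0
    then show ?case by (simp add: T_def)
  next
    case (Suc n)
    then show ?case by (simp add: T_Suc x_def lessThan_Suc)
  qed
  have T_sub: "T n \<subseteq> A" for n
  proof (induction n)
    case 0
    then show ?case by (simp add: T_def)
  next
    case (Suc n)
    moreover have "finite (T n)" by (simp add: T)
    ultimately show ?case using pick[of "T n"] by (simp add: T_Suc)
  qed
  have "x n \<in> A \<and> P (T n) (x n)" for n
    unfolding x_def by (rule pick[OF _ T_sub]) (simp add: T)
  then show ?thesis unfolding T by blast
qed

lemma finite_codim_not_subset_span:
  assumes "infinite_dimensional TYPE('a::real_vector)" "finite_codim (Z :: 'a set)" "finite F"
  shows "\<not> Z \<subseteq> span F"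
proof
  assume "Z \<subseteq> span F"
  obtain G where "finite G" "span (Z \<union> G) = UNIV" using assms(2) unfolding finite_codim_def by blast
  have "span F \<subseteq> span (F \<union> G)" by (simp add: span_mono)
  moreover have "G \<subseteq> span (F \<union> G)" using span_superset[of "F \<union> G"] by blast
  ultimately have "Z \<union> G \<subseteq> span (F \<union> G)" using \<open>Z \<subseteq> span F\<close> by blast
  then have "span (Z \<union> G) \<subseteq> span (F \<union> G)" by (simp add: span_minimal)
  with \<open>span (Z \<union> G) = UNIV\<close> have "span (F \<union> G) = UNIV" by blast
  with \<open>finite G\<close> \<open>finite F\<close> show False using assms(1) unfolding infinite_dimensional_def by blast
qed

lemma finite_codim_separated_sequence:
  fixes Z :: "'a::real_normed_vector set"
  assumes "infinite_dimensional TYPE('a)" "finite_codim Z"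
  shows "\<exists>zs::nat \<Rightarrow> 'a. (\<forall>n. zs n \<in> Z \<and> norm (zs n) = 1) \<and>
           (\<forall>m n. m \<noteq> n \<longrightarrow> 1/2 \<le> norm (zs m - zs n))"
proof -
  have "subspace Z" using assms(2) unfolding finite_codim_def by blast
  have "\<exists>z\<in>Z. norm z = 1 \<and> (\<forall>v\<in>span F. 1/2 \<le> norm (z - v))"
    if "finite F" "F \<subseteq> Z" for F
    by (rule riesz_unit_vector[OF \<open>subspace Z\<close> that finite_codim_not_subset_span[OF assms that(1)]])
  from sequence_avoiding_finite_subsets[of Z "\<lambda>F z. norm z = 1 \<and> (\<forall>v\<in>span F. 1/2 \<le> norm (z - v))", OF this]
  obtain zs :: "nat \<Rightarrow> 'a" where zs: "\<forall>n. zs n \<in> Z \<and> norm (zs n) = 1 \<and>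
      (\<forall>v\<in>span (zs ` {..<n}). 1/2 \<le> norm (zs n - v))"
    by blast
  have far: "1/2 \<le> norm (zs m - zs n)" if "n < m" for m n
  proof -
    have "zs n \<in> span (zs ` {..<m})" using that by (intro span_base) simp
    then show ?thesis using zs by blast
  qed
  have separated: "1/2 \<le> norm (zs m - zs n)" if "m \<noteq> n" for m n
  proof (cases "n < m")
    case True
    then show ?thesis by (rule far)
  next
    case False
    with that have "1/2 \<le> norm (zs n - zs m)" by (intro far) simp
    then show ?thesis by (simp only: norm_minus_commute)
  qed
  then show ?thesis using zs by blast
qed


lemma sep_geI:
  assumes "\<And>i j. i \<noteq> j \<Longrightarrow> s \<le> norm (xs i - xs j)"
  shows "s \<le> sep xs"
  unfolding sep_def
proof (rule cINF_greatest)
  show "{(i, j). i \<noteq> (j::nat)} \<noteq> {}" by (auto intro: exI[of _ "(0, 1)"])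
qed (use assms in auto)

lemma bdd_above_beta_values:
  "bdd_above {(INF n. norm (x - xs n) / 2) | (x::'a::real_normed_vector) xs.
     x \<in> cball 0 1 \<and> (\<forall>n. xs n \<in> cball 0 1) \<and> s \<le> sep xs}"
proof (rule bdd_aboveI)
  fix v assume "v \<in> {(INF n. norm (x - xs n) / 2) | (x::'a) xs.
     x \<in> cball 0 1 \<and> (\<forall>n. xs n \<in> cball 0 1) \<and> s \<le> sep xs}"
  then obtain x and xs :: "nat \<Rightarrow> 'a" where v: "v = (INF n. norm (x - xs n) / 2)"
    and "x \<in> cball 0 1" "xs 0 \<in> cball 0 1" by blast
  have "v \<le> norm (x - xs 0) / 2" unfolding v
    by (rule cINF_lower) (auto intro: bdd_belowI[of _ 0])
  also have "norm (x - xs 0) \<le> norm x + norm (xs 0)" by (rule norm_triangle_ineq4)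
  finally show "v \<le> 1" using \<open>x \<in> cball 0 1\<close> \<open>xs 0 \<in> cball 0 1\<close> by simp
qed

lemma beta_bar_close_point:
  fixes x :: "'a::real_normed_vector"
  assumes "x \<in> cball 0 1" "\<forall>n. xs n \<in> cball 0 1" "s \<le> sep xs" "e > 0"
  shows "\<exists>n. norm (x - xs n) < 2 * (1 - beta_bar TYPE('a) s + e)"
proof -
  let ?B = "{(INF n. norm (x - xs n) / 2) | (x::'a) xs.
     x \<in> cball 0 1 \<and> (\<forall>n. xs n \<in> cball 0 1) \<and> s \<le> sep xs}"
  have "(INF n. norm (x - xs n) / 2) \<in> ?B" using assms by blast
  then have "(INF n. norm (x - xs n) / 2) \<le> Sup ?B" by (rule cSup_upper[OF _ bdd_above_beta_values])
  also have "Sup ?B = 1 - beta_bar TYPE('a) s" unfolding beta_bar_def by simp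
  finally have "(INF n. norm (x - xs n) / 2) < 1 - beta_bar TYPE('a) s + e" using assms(4) by simp
  then obtain n where "norm (x - xs n) / 2 < 1 - beta_bar TYPE('a) s + e"
    by (subst (asm) cINF_less_iff) (auto intro: bdd_belowI[of _ 0])
  then show ?thesis by (intro exI[of _ n]) simp
qed

lemma beta_bar_close_point_scaled:
  fixes x m :: "'a::real_normed_vector" and xs :: "nat \<Rightarrow> 'a"
  assumes "R > 0" "e > 0" "dist x m \<le> R" "\<And>n. dist (xs n) m \<le> R"
    and "\<And>i j. i \<noteq> j \<Longrightarrow> s * R \<le> dist (xs i) (xs j)"
  shows "\<exists>n. dist x (xs n) < 2 * R * (1 - beta_bar TYPE('a) s + e)"
proof -
  define scale where "scale v = (1 / R) *\<^sub>R (v - m)" for v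
  have norm_scale: "norm (scale v - scale w) = dist v w / R" for v w
  proof -
    have "scale v - scale w = (1 / R) *\<^sub>R (v - w)" unfolding scale_def by (simp add: algebra_simps)
    then show ?thesis using assms(1) by (simp add: dist_norm)
  qed
  have "scale v \<in> cball 0 1" if "dist v m \<le> R" for v
    using norm_scale[of v m] that assms(1) by (simp add: scale_def divide_le_eq_1)
  then have "scale x \<in> cball 0 1" "\<forall>n. scale (xs n) \<in> cball 0 1" using assms(3,4) by auto
  moreover have "s \<le> sep (\<lambda>n. scale (xs n))"
  proof (rule sep_geI)
    fix i j :: nat assume "i \<noteq> j"
    then show "s \<le> norm (scale (xs i) - scale (xs j))"
      using assms(1,5) norm_scale by (simp add: le_divide_eq)
  qed
  ultimately obtain n where "norm (scale x - scale (xs n)) < 2 * (1 - beta_bar TYPE('a) s + e)"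
    using beta_bar_close_point[of "scale x" "\<lambda>n. scale (xs n)" s e] assms(2) by blast
  then have "dist x (xs n) / R < 2 * (1 - beta_bar TYPE('a) s + e)" by (simp add: norm_scale)
  then have "dist x (xs n) < 2 * (1 - beta_bar TYPE('a) s + e) * R"
    using assms(1) by (simp add: divide_less_eq)
  then show ?thesis by (intro exI[of _ n]) (simp add: mult_ac)
qed

lemma exists_unit_vector:
  assumes "infinite_dimensional TYPE('a::real_normed_vector)"
  obtains e :: "'a::real_normed_vector" where "norm e = 1"
proof -
  have "span {} \<noteq> (UNIV::'a set)" using assms unfolding infinite_dimensional_def by blast
  then obtain x :: 'a where "x \<noteq> 0" by auto
  then have "norm (x /\<^sub>R norm x) = 1" by simp
  then show ?thesis by (rule that)
qed

lemma beta_bar_nonpos: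
  assumes "infinite_dimensional TYPE('a::real_normed_vector)" "s \<le> 0"
  shows "beta_bar TYPE('a) s \<le> 0"
proof -
  let ?B = "{(INF n. norm (x - xs n) / 2) | (x::'a) xs.
     x \<in> cball 0 1 \<and> (\<forall>n. xs n \<in> cball 0 1) \<and> s \<le> sep xs}"
  obtain e :: 'a where e: "norm e = 1" using exists_unit_vector[OF assms(1)] by blast
  have "s \<le> sep (\<lambda>n::nat. - e)" using assms(2) by (intro sep_geI) simp
  then have "(INF n::nat. norm (e - - e) / 2) \<in> ?B"
    using e by (intro CollectI exI[of _ e] exI[of _ "\<lambda>n::nat. - e"]) simp
  moreover have "norm (e - - e) = 2" using e by (simp flip: scaleR_2)
  ultimately have "1 \<in> ?B" by simp
  then have "1 \<le> Sup ?B" by (rule cSup_upper[OF _ bdd_above_beta_values])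
  then show ?thesis unfolding beta_bar_def by simp
qed

definition rho_codim :: "'a::real_normed_vector \<Rightarrow> real \<Rightarrow> 'a set \<Rightarrow> real" where
  "rho_codim y t Z = (SUP z\<in>sphere 0 1 \<inter> Z. norm (y + t *\<^sub>R z) - 1)"

lemma rho_bar_eq:
  "rho_bar TYPE('a::real_normed_vector) t =
     (SUP y\<in>sphere (0::'a) 1. INF Z\<in>{Z. finite_codim Z}. rho_codim y t Z)"
  unfolding rho_bar_def rho_codim_def ..

lemma finite_codim_UNIV: "finite_codim (UNIV::'a::real_vector set)"
  unfolding finite_codim_def by (auto intro: exI[of _ "{}"])

lemma rho_codim_bounds:
  fixes y :: "'a::real_normed_vector"
  assumes "infinite_dimensional TYPE('a)" "finite_codim Z" "norm y = 1" "t > 0"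
  shows "bdd_above ((\<lambda>z. norm (y + t *\<^sub>R z) - 1) ` (sphere 0 1 \<inter> Z))"
    and "0 \<le> rho_codim y t Z" and "rho_codim y t Z \<le> t"
proof -
  have le_t: "norm (y + t *\<^sub>R z) - 1 \<le> t" if "z \<in> sphere 0 1 \<inter> Z" for z
    using norm_triangle_ineq[of y "t *\<^sub>R z"] that assms(3,4) by simp
  then show bdd: "bdd_above ((\<lambda>z. norm (y + t *\<^sub>R z) - 1) ` (sphere 0 1 \<inter> Z))"
    by (intro bdd_aboveI2)
  obtain zs :: "nat \<Rightarrow> 'a" where zs: "\<forall>n. zs n \<in> Z \<and> norm (zs n) = 1"
    using finite_codim_separated_sequence[OF assms(1,2)] by blast
  define z where "z = zs 0"
  have z: "z \<in> Z" "norm z = 1" using zs by (simp_all add: z_def)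
  have "subspace Z" using assms(2) unfolding finite_codim_def by blast
  then have "- z \<in> Z" using z(1) by (rule subspace_neg)
  have "norm (2 *\<^sub>R y) \<le> norm (y + t *\<^sub>R z) + norm (y + t *\<^sub>R (- z))"
    using norm_triangle_ineq[of "y + t *\<^sub>R z" "y + t *\<^sub>R (- z)"] by (simp add: scaleR_2)
  moreover have "norm (2 *\<^sub>R y) = 2" using assms(3) by simp
  ultimately have "1 \<le> norm (y + t *\<^sub>R z) \<or> 1 \<le> norm (y + t *\<^sub>R (- z))" by linarith
  then obtain w where w: "w \<in> sphere 0 1 \<inter> Z" "0 \<le> norm (y + t *\<^sub>R w) - 1"
  proof
    assume "1 \<le> norm (y + t *\<^sub>R z)"
    then show thesis using z by (intro that[of z]) auto
  next
    assume "1 \<le> norm (y + t *\<^sub>R (- z))"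
    then show thesis using z \<open>- z \<in> Z\<close> by (intro that[of "- z"]) auto
  qed
  show "0 \<le> rho_codim y t Z"
    unfolding rho_codim_def using w(2) cSUP_upper[OF w(1) bdd] by linarith
  show "rho_codim y t Z \<le> t"
    unfolding rho_codim_def using le_t w(1) by (intro cSUP_least) auto
qed

lemma rho_inf_bounds:
  fixes y :: "'a::real_normed_vector"
  assumes "infinite_dimensional TYPE('a)" "norm y = 1" "t > 0"
  shows "bdd_below ((\<lambda>Z. rho_codim y t Z) ` {Z. finite_codim Z})"
    and "0 \<le> (INF Z\<in>{Z. finite_codim Z}. rho_codim y t Z)"
    and "(INF Z\<in>{Z. finite_codim Z}. rho_codim y t Z) \<le> t"
proof -
  show bdd: "bdd_below ((\<lambda>Z. rho_codim y t Z) ` {Z. finite_codim Z})"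
    using rho_codim_bounds(2)[OF assms(1) _ assms(2,3)] by (intro bdd_belowI2) auto
  show "0 \<le> (INF Z\<in>{Z. finite_codim Z}. rho_codim y t Z)"
    using rho_codim_bounds(2)[OF assms(1) _ assms(2,3)] finite_codim_UNIV
    by (intro cINF_greatest) auto
  have "(INF Z\<in>{Z. finite_codim Z}. rho_codim y t Z) \<le> rho_codim y t UNIV"
    using finite_codim_UNIV by (intro cINF_lower[OF bdd]) simp
  also have "\<dots> \<le> t" by (rule rho_codim_bounds(3)[OF assms(1) finite_codim_UNIV assms(2,3)])
  finally show "(INF Z\<in>{Z. finite_codim Z}. rho_codim y t Z) \<le> t" .
qed

lemma rho_bar_bounds:
  assumes "infinite_dimensional TYPE('a::real_normed_vector)" "t > 0"
  shows "\<And>y::'a. norm y = 1 \<Longrightarrow> (INF Z\<in>{Z. finite_codim Z}. rho_codim y t Z) \<le> rho_bar TYPE('a) t"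
    and "0 \<le> rho_bar TYPE('a) t" and "rho_bar TYPE('a) t \<le> t"
proof -
  have bdd: "bdd_above ((\<lambda>y::'a. INF Z\<in>{Z. finite_codim Z}. rho_codim y t Z) ` sphere 0 1)"
    using rho_inf_bounds(3)[OF assms(1) _ assms(2)] by (intro bdd_aboveI2) auto
  show le: "(INF Z\<in>{Z. finite_codim Z}. rho_codim y t Z) \<le> rho_bar TYPE('a) t"
    if "norm y = 1" for y :: 'a
    unfolding rho_bar_eq using that by (intro cSUP_upper[OF _ bdd]) simp
  obtain e :: 'a where "norm e = 1" using exists_unit_vector[OF assms(1)] by blast
  then show "0 \<le> rho_bar TYPE('a) t"
    using le rho_inf_bounds(2)[OF assms(1) _ assms(2)] by (meson order_trans)
  show "rho_bar TYPE('a) t \<le> t" unfolding rho_bar_eq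
    using rho_inf_bounds(3)[OF assms(1) _ assms(2)] \<open>norm e = 1\<close>
    by (intro cSUP_least) auto
qed

lemma rho_bar_finite_codim:
  fixes u :: "'a::real_normed_vector"
  assumes "infinite_dimensional TYPE('a)" "t > 0" "norm u = 1" "e > 0"
  shows "\<exists>Z. finite_codim Z \<and>
           (\<forall>z\<in>Z. norm z = 1 \<longrightarrow> norm (u + t *\<^sub>R z) \<le> 1 + rho_bar TYPE('a) t + e)"
proof -
  have "(INF Z\<in>{Z. finite_codim Z}. rho_codim u t Z) < rho_bar TYPE('a) t + e"
    using rho_bar_bounds(1)[OF assms(1,2,3)] assms(4) by linarith
  then obtain Z where Z: "finite_codim Z" and less: "rho_codim u t Z < rho_bar TYPE('a) t + e"
    using finite_codim_UNIV by (subst (asm) cINF_less_iff[OF _ rho_inf_bounds(1)[OF assms(1,3,2)]]) auto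
  have "norm (u + t *\<^sub>R z) - 1 \<le> rho_codim u t Z" if "z \<in> Z" "norm z = 1" for z
    unfolding rho_codim_def using that
    by (intro cSUP_upper[OF _ rho_codim_bounds(1)[OF assms(1) Z assms(3,2)]]) simp
  with Z less show ?thesis by fastforce
qed

lemma rho_bar_separated_directions:
  fixes u :: "'a::real_normed_vector"
  assumes "infinite_dimensional TYPE('a)" "t > 0" "norm u = 1" "e > 0"
  shows "\<exists>zs::nat \<Rightarrow> 'a. (\<forall>n. norm (zs n) = 1 \<and>
             norm (u + t *\<^sub>R zs n) \<le> 1 + rho_bar TYPE('a) t + e \<and>
             norm (u - t *\<^sub>R zs n) \<le> 1 + rho_bar TYPE('a) t + e) \<and>
           (\<forall>m n. m \<noteq> n \<longrightarrow> 1/2 \<le> norm (zs m - zs n))"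
proof -
  obtain Z where Z: "finite_codim Z"
    and bound: "\<forall>z\<in>Z. norm z = 1 \<longrightarrow> norm (u + t *\<^sub>R z) \<le> 1 + rho_bar TYPE('a) t + e"
    using rho_bar_finite_codim[OF assms] by blast
  obtain zs :: "nat \<Rightarrow> 'a" where zs: "\<forall>n. zs n \<in> Z \<and> norm (zs n) = 1"
    and separated: "\<forall>m n. m \<noteq> n \<longrightarrow> 1/2 \<le> norm (zs m - zs n)"
    using finite_codim_separated_sequence[OF assms(1) Z] by blast
  have "subspace Z" using Z unfolding finite_codim_def by blast
  then have "- zs n \<in> Z" for n using zs by (simp add: subspace_neg)
  then have "norm (u - t *\<^sub>R zs n) \<le> 1 + rho_bar TYPE('a) t + e" for n
    using bound[rule_format, of "- zs n"] zs by simp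
  then show ?thesis using zs bound separated by blast
qed


definition lifting_constant ::
    "('a::metric_space \<Rightarrow> 'b::metric_space) \<Rightarrow> 'a set \<Rightarrow> real \<Rightarrow> real \<Rightarrow> real \<Rightarrow> bool" where
  "lifting_constant f S K d c \<longleftrightarrow>
     (\<forall>x\<in>S. \<forall>r\<ge>d. \<forall>y. dist y (f x) \<le> r \<longrightarrow> (\<exists>a\<in>S. dist a x \<le> c * r \<and> dist y (f a) \<le> K))"

lemma lifting_constantD:
  assumes "lifting_constant f S K d c" "x \<in> S" "d \<le> r" "dist y (f x) \<le> r"
  shows "\<exists>a\<in>S. dist a x \<le> c * r \<and> dist y (f a) \<le> K"
  using assms unfolding lifting_constant_def by blast

lemma lifting_constant_iff:
  "lifting_constant f S K d c \<longleftrightarrow>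
     (\<forall>x\<in>S. \<forall>r\<ge>d. cball (f x) r \<subseteq> enlarge (f ` ball_in S x (c * r)) K)"
  unfolding lifting_constant_def enlarge_def ball_in_def
  by (auto simp: dist_commute subset_iff Bex_def)

lemma c_inf_less_imp_lifting_constant:
  assumes "c_inf f S K < ereal c"
  obtains d c' where "K < d" "0 < c'" "c' < c" "lifting_constant f S K d c'"
proof -
  obtain d where "K < d" "c_d f S K d < ereal c"
    using assms unfolding c_inf_def by (auto simp: INF_less_iff)
  then obtain c' where "0 < c'" "c' < c" "\<forall>x\<in>S. \<forall>r\<ge>d. cball (f x) r \<subseteq> enlarge (f ` ball_in S x (c' * r)) K"
    unfolding c_d_def by (auto simp: Inf_less_iff)
  with \<open>K < d\<close> show ?thesis using that lifting_constant_iff by blast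
qed

lemma lifting_constant_imp_c_inf_le:
  assumes "K < d" "0 < c" "lifting_constant f S K d c"
  shows "c_inf f S K \<le> ereal c"
proof -
  have "c_d f S K d \<le> ereal c"
    unfolding c_d_def using assms(2,3) lifting_constant_iff by (intro Inf_lower) blast
  moreover have "c_inf f S K \<le> c_d f S K d" unfolding c_inf_def using assms(1) by (intro INF_lower) simp
  ultimately show ?thesis by simp
qed

lemma c_inf_nonneg: "0 \<le> c_inf f S K"
  unfolding c_inf_def c_d_def by (intro INF_greatest Inf_greatest) auto

lemma Lip_inf_affine_bound:
  assumes "coarsely_continuous f S" "Lip_inf f S < ereal L" "0 \<le> L"
  obtains W where "\<forall>a\<in>S. \<forall>b\<in>S. dist (f a) (f b) \<le> L * dist a b + W"
proof -
  obtain s0 where "0 < s0" and Lip: "Lip_s f S s0 < ereal L"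
    using assms(2) unfolding Lip_inf_def by (auto simp: INF_less_iff)
  have large: "dist (f a) (f b) \<le> L * dist a b" if "a \<in> S" "b \<in> S" "s0 \<le> dist a b" for a b
  proof -
    have "ereal (dist (f a) (f b) / dist a b) \<le> Lip_s f S s0"
      unfolding Lip_s_def using that by (intro SUP_upper2[of "(a, b)"]) auto
    then have "ereal (dist (f a) (f b) / dist a b) < ereal L" using Lip by (rule order.strict_trans1)
    then have "dist (f a) (f b) / dist a b < L" by simp
    moreover have "0 < dist a b" using that \<open>0 < s0\<close> by linarith
    ultimately show ?thesis by (simp add: divide_less_eq)
  qed
  have "omega f S s0 < \<infinity>" using assms(1) \<open>0 < s0\<close> unfolding coarsely_continuous_def by blast
  define W where "W = max 0 (real_of_ereal (omega f S s0))"
  have small: "dist (f a) (f b) \<le> W" if "a \<in> S" "b \<in> S" "dist a b \<le> s0" for a b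
  proof -
    have "ereal (dist (f a) (f b)) \<le> omega f S s0"
      unfolding omega_def using that by (intro SUP_upper2[of "(a, b)"]) auto
    with \<open>omega f S s0 < \<infinity>\<close> show ?thesis
      unfolding W_def by (cases "omega f S s0") auto
  qed
  have "dist (f a) (f b) \<le> L * dist a b + W" if "a \<in> S" "b \<in> S" for a b
  proof (cases "s0 \<le> dist a b")
    case True
    then show ?thesis using large[OF that] W_def by fastforce
  next
    case False
    then show ?thesis using small[OF that] assms(3) by (simp add: add_increasing)
  qed
  then show ?thesis using that by blast
qed

lemma dist_le_of_affine_bound:
  assumes "\<forall>a\<in>S. \<forall>b\<in>S. dist (f a) (f b) \<le> L * dist a b + W" "a \<in> S" "b \<in> S"
    and "dist p (f a) \<le> K" "dist q (f b) \<le> K"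
  shows "dist p q \<le> L * dist a b + W + 2 * K"
proof -
  have "dist p q \<le> dist p (f a) + dist (f a) (f b) + dist q (f b)"
    using dist_triangle[of p q "f a"] dist_triangle[of "f a" q "f b"] by (simp add: dist_commute)
  then show ?thesis using assms by fastforce
qed


lemma fork_points:
  fixes v y :: "'b::real_normed_vector"
  assumes "infinite_dimensional TYPE('b)" "0 < t" "0 < e" "0 < b"
    and \<rho>: "\<rho> = rho_bar TYPE('b) t + e" and y: "dist y v = b * (3 + \<rho>)"
  shows "\<exists>q (p::nat \<Rightarrow> 'b). dist q v \<le> b * (1 + \<rho>) \<and>
           (\<forall>n. dist (p n) q \<le> b * (1 + \<rho>) \<and> dist y (p n) \<le> b * (1 + \<rho>)) \<and>
           (\<forall>i j. i \<noteq> j \<longrightarrow> b * t / 2 \<le> dist (p i) (p j))"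
proof -
  have "0 \<le> \<rho>" unfolding \<rho> using rho_bar_bounds(2)[OF assms(1,2)] \<open>0 < e\<close> by simp
  then have "0 < dist y v" using y \<open>0 < b\<close> by simp
  define u where "u = (1 / dist y v) *\<^sub>R (y - v)"
  have "norm u = 1" using \<open>0 < dist y v\<close> by (simp add: u_def dist_norm)
  have y_eq: "y = v + (b * (3 + \<rho>)) *\<^sub>R u"
    using \<open>0 < dist y v\<close> unfolding y[symmetric] by (simp add: u_def)
  have "\<exists>zs::nat \<Rightarrow> 'b. (\<forall>n. norm (zs n) = 1 \<and> norm (u + t *\<^sub>R zs n) \<le> 1 + \<rho> \<and>
      norm (u - t *\<^sub>R zs n) \<le> 1 + \<rho>) \<and> (\<forall>m n. m \<noteq> n \<longrightarrow> 1/2 \<le> norm (zs m - zs n))"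
    using rho_bar_separated_directions[OF assms(1,2) \<open>norm u = 1\<close> \<open>0 < e\<close>] by (simp add: \<rho> add.assoc)
  then obtain zs :: "nat \<Rightarrow> 'b" where zs: "\<forall>n. norm (zs n) = 1 \<and> norm (u + t *\<^sub>R zs n) \<le> 1 + \<rho> \<and>
      norm (u - t *\<^sub>R zs n) \<le> 1 + \<rho>" and zs_sep: "\<forall>m n. m \<noteq> n \<longrightarrow> 1/2 \<le> norm (zs m - zs n)"
    by blast
  define q where "q = v + (b * (1 + \<rho>)) *\<^sub>R u"
  define p where "p n = q + b *\<^sub>R (u + t *\<^sub>R zs n)" for n
  have "dist q v \<le> b * (1 + \<rho>)"
    using \<open>norm u = 1\<close> \<open>0 < b\<close> \<open>0 \<le> \<rho>\<close> by (simp add: q_def dist_norm)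
  moreover have "dist (p n) q \<le> b * (1 + \<rho>)" for n
    using zs \<open>0 < b\<close> by (simp add: p_def dist_norm mult_left_mono)
  moreover have "dist y (p n) \<le> b * (1 + \<rho>)" for n
  proof -
    have "y - q = (b * (3 + \<rho>) - b * (1 + \<rho>)) *\<^sub>R u" by (simp add: y_eq q_def scaleR_diff_left)
    also have "b * (3 + \<rho>) - b * (1 + \<rho>) = b + b" by (simp add: algebra_simps)
    finally have "y - q = b *\<^sub>R u + b *\<^sub>R u" by (simp only: scaleR_add_left)
    then have "y - p n = b *\<^sub>R (u - t *\<^sub>R zs n)" by (simp add: p_def algebra_simps eq_diff_eq)
    then show ?thesis using zs \<open>0 < b\<close> by (simp add: dist_norm mult_left_mono)
  qed
  moreover have "b * t / 2 \<le> dist (p i) (p j)" if "i \<noteq> j" for i j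
  proof -
    have "p i - p j = (b * t) *\<^sub>R (zs i - zs j)" by (simp add: p_def algebra_simps)
    then show ?thesis using zs_sep that \<open>0 < b\<close> \<open>0 < t\<close> by (simp add: dist_norm)
  qed
  ultimately show ?thesis by blast
qed

lemma lifting_constant_fork:
  fixes f :: "'a::real_normed_vector \<Rightarrow> 'b::real_normed_vector"
  assumes "infinite_dimensional TYPE('b)"
    and affine: "\<forall>a\<in>S. \<forall>b\<in>S. dist (f a) (f b) \<le> L * dist a b + W" and "0 < L"
    and lift: "lifting_constant f S K d c" and "0 < c" "0 \<le> K"
    and "x \<in> S" "0 < t" "0 < e" and \<rho>: "\<rho> = rho_bar TYPE('b) t + e"
    and y: "dist y (f x) = b * (3 + \<rho>)" and "0 < b" "d \<le> b"
    and "2 * K + W \<le> b * t / 4" and "s * L * c * (b * (1 + \<rho>) + K) \<le> b * t / 4"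
  shows "\<exists>a\<in>S. dist y (f a) \<le> K \<and>
           dist a x \<le> c * (b * (1 + \<rho>) + K) * (3 - 2 * beta_bar TYPE('a) s + 2 * e)"
proof -
  have "0 \<le> \<rho>" unfolding \<rho> using rho_bar_bounds(2)[OF assms(1,8)] \<open>0 < e\<close> by simp
  define A where "A = b * (1 + \<rho>)"
  define R where "R = c * (A + K)"
  have "b \<le> A" using \<open>0 < b\<close> \<open>0 \<le> \<rho>\<close> by (simp add: A_def)
  then have "d \<le> A" "0 < A" using \<open>d \<le> b\<close> \<open>0 < b\<close> by linarith+
  obtain q and p :: "nat \<Rightarrow> 'b" where "dist q (f x) \<le> A"
    and p: "\<And>n. dist (p n) q \<le> A \<and> dist y (p n) \<le> A"
    and p_sep: "\<And>i j. i \<noteq> j \<Longrightarrow> b * t / 2 \<le> dist (p i) (p j)"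
    using fork_points[OF assms(1,8,9) \<open>0 < b\<close> \<rho> y] unfolding A_def by blast
  obtain m where "m \<in> S" "dist m x \<le> c * A" "dist q (f m) \<le> K"
    using lifting_constantD[OF lift \<open>x \<in> S\<close> \<open>d \<le> A\<close> \<open>dist q (f x) \<le> A\<close>] by blast
  have "\<exists>a\<in>S. dist a m \<le> R \<and> dist (p n) (f a) \<le> K" for n
  proof -
    have "dist (p n) (f m) \<le> A + K"
      using dist_triangle[of "p n" "f m" q] p[of n] \<open>dist q (f m) \<le> K\<close> by linarith
    then show ?thesis
      unfolding R_def using lifting_constantD[OF lift \<open>m \<in> S\<close>] \<open>d \<le> A\<close> \<open>0 \<le> K\<close> by simp
  qed
  then obtain xs where xs: "\<And>n. xs n \<in> S" "\<And>n. dist (xs n) m \<le> R" "\<And>n. dist (p n) (f (xs n)) \<le> K"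
    by metis
  have "s * L * R \<le> b * t / 4" using assms(15) by (simp add: R_def A_def mult.assoc)
  have "s * R \<le> dist (xs i) (xs j)" if "i \<noteq> j" for i j
  proof -
    have "b * t / 2 \<le> L * dist (xs i) (xs j) + W + 2 * K"
      using p_sep[OF that] dist_le_of_affine_bound[OF affine xs(1)[of i] xs(1)[of j] xs(3)[of i] xs(3)[of j]]
      by linarith
    then have "s * L * R \<le> L * dist (xs i) (xs j)"
      using assms(14) \<open>s * L * R \<le> b * t / 4\<close> by linarith
    then show ?thesis using \<open>0 < L\<close> by (simp add: mult.commute mult.left_commute)
  qed
  moreover have "dist x m \<le> R"
  proof -
    have "c * A \<le> R" using \<open>0 < c\<close> \<open>0 \<le> K\<close> by (simp add: R_def distrib_left)
    then show ?thesis using \<open>dist m x \<le> c * A\<close> by (simp add: dist_commute)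
  qed
  moreover have "0 < R" using \<open>0 < c\<close> \<open>0 < A\<close> \<open>0 \<le> K\<close> by (simp add: R_def)
  ultimately obtain n where n: "dist x (xs n) < 2 * R * (1 - beta_bar TYPE('a) s + e)"
    using beta_bar_close_point_scaled[of R e x m xs s] xs(2) \<open>0 < e\<close> by blast
  have "dist y (f (xs n)) \<le> A + K"
    using dist_triangle[of y "f (xs n)" "p n"] p[of n] xs(3)[of n] by linarith
  then have "\<exists>a\<in>S. dist a (xs n) \<le> R \<and> dist y (f a) \<le> K"
    unfolding R_def using lifting_constantD[OF lift xs(1)[of n]] \<open>d \<le> A\<close> \<open>0 \<le> K\<close> by simp
  then obtain a where "a \<in> S" "dist a (xs n) \<le> R" "dist y (f a) \<le> K" by blast
  moreover have "dist a x \<le> R * (3 - 2 * beta_bar TYPE('a) s + 2 * e)"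
    using dist_triangle[of a x "xs n"] n \<open>dist a (xs n) \<le> R\<close> by (simp add: dist_commute algebra_simps)
  ultimately show ?thesis unfolding R_def A_def by blast
qed

lemma lifting_constant_of_affine_lifting:
  assumes lift: "\<forall>x\<in>S. \<forall>y. \<exists>a\<in>S. dist y (f a) \<le> K \<and> dist a x \<le> \<gamma> * dist y (f x) + B"
    and "0 \<le> \<gamma>" "\<gamma> < \<gamma>'"
  obtains d where "K < d" "lifting_constant f S K d \<gamma>'"
proof -
  define d where "d = max (K + 1) (B / (\<gamma>' - \<gamma>))"
  have "dist a x \<le> \<gamma>' * r"
    if "d \<le> r" "dist y (f x) \<le> r" "dist a x \<le> \<gamma> * dist y (f x) + B" for a x y r
  proof -
    have "B \<le> (\<gamma>' - \<gamma>) * r" using that(1) \<open>\<gamma> < \<gamma>'\<close> by (simp add: d_def field_simps)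
    moreover have "\<gamma> * dist y (f x) \<le> \<gamma> * r" using that(2) \<open>0 \<le> \<gamma>\<close> by (rule mult_left_mono)
    ultimately show ?thesis using that(3) by (simp add: algebra_simps)
  qed
  then have "lifting_constant f S K d \<gamma>'" using lift unfolding lifting_constant_def by meson
  moreover have "K < d" by (simp add: d_def)
  ultimately show ?thesis using that by blast
qed

lemma fork_cost_le:
  fixes b c K F \<rho> \<mu> :: real
  assumes "0 < c" "0 < b" "0 \<le> K" "F \<le> 3" "(1 + \<rho>) * F \<le> (3 + \<rho>) * (1 - \<mu>)"
  shows "c * (b * (1 + \<rho>) + K) * F \<le> c * (1 - \<mu>) * (b * (3 + \<rho>)) + c * (3 * K)"
proof -
  have "c * b * ((1 + \<rho>) * F) \<le> c * b * ((3 + \<rho>) * (1 - \<mu>))"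
    using assms by (intro mult_left_mono) auto
  moreover have "c * K * F \<le> c * K * 3" using assms by (intro mult_left_mono) auto
  ultimately show ?thesis by (simp add: algebra_simps)
qed

lemma fork_gain:
  fixes \<beta> \<rho> e :: real
  assumes "0 \<le> \<rho>" "0 < e" "4 * e \<le> \<beta> - \<rho>"
  shows "(1 + (\<rho> + e)) * (3 - 2 * \<beta> + 2 * e) \<le> 3 + \<rho> - 3 * e"
proof -
  have "(1 + (\<rho> + e)) * (3 - 2 * \<beta> + 2 * e) \<le> (1 + (\<rho> + e)) * (3 - 2 * \<rho> - 6 * e)"
    using assms by (intro mult_left_mono) auto
  also have "\<dots> = 3 + \<rho> - 3 * e - (\<rho> + e) * (2 * \<rho> + 6 * e)" by (simp add: algebra_simps)
  also have "\<dots> \<le> 3 + \<rho> - 3 * e" using assms by simp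
  finally show ?thesis .
qed

lemma lifting_constant_affine_improvement:
  fixes f :: "'a::real_normed_vector \<Rightarrow> 'b::real_normed_vector"
  assumes "infinite_dimensional TYPE('b)"
    and affine: "\<forall>a\<in>S. \<forall>b\<in>S. dist (f a) (f b) \<le> L * dist a b + W" and "0 < L"
    and lift: "lifting_constant f S K d c" and "0 < c" "0 \<le> K" "K < d"
    and "0 < t" "0 < e" "0 \<le> s" "12 * s * L * c \<le> t"
    and \<rho>: "\<rho> = rho_bar TYPE('b) t + e" and "\<rho> \<le> 5/4" and "e \<le> beta_bar TYPE('a) s"
    and contract: "(1 + \<rho>) * (3 - 2 * beta_bar TYPE('a) s + 2 * e) \<le> (3 + \<rho>) * (1 - \<mu>)"
    and "\<mu> \<le> 1"
  shows "\<exists>B. \<forall>x\<in>S. \<forall>y. \<exists>a\<in>S. dist y (f a) \<le> K \<and> dist a x \<le> c * (1 - \<mu>) * dist y (f x) + B"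
proof -
  have "0 \<le> \<rho>" unfolding \<rho> using rho_bar_bounds(2)[OF assms(1,8)] \<open>0 < e\<close> by simp
  define B where "B = max d (max ((8 * K + 4 * W) / t) (4 * K / 3))"
  have "0 < B" using \<open>0 \<le> K\<close> \<open>K < d\<close> by (simp add: B_def)
  have "\<exists>a\<in>S. dist y (f a) \<le> K \<and> dist a x \<le> c * (1 - \<mu>) * dist y (f x) + c * (3 * K + 5 * B)"
    if x: "x \<in> S" for x y
  proof (cases "dist y (f x) < 5 * B")
    case True
    have "d \<le> 5 * B" using \<open>0 < B\<close> by (simp add: B_def)
    then obtain a where "a \<in> S" "dist a x \<le> c * (5 * B)" "dist y (f a) \<le> K"
      using lifting_constantD[OF lift x] True by (meson less_imp_le)
    moreover have "0 \<le> c * (1 - \<mu>) * dist y (f x) + c * (3 * K)"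
      using \<open>0 < c\<close> \<open>\<mu> \<le> 1\<close> \<open>0 \<le> K\<close> by simp
    ultimately show ?thesis by (auto simp: algebra_simps)
  next
    case False
    define b where "b = dist y (f x) / (3 + \<rho>)"
    have y: "dist y (f x) = b * (3 + \<rho>)" and "0 \<le> b" using \<open>0 \<le> \<rho>\<close> by (simp_all add: b_def)
    have "5 * B \<le> b * (3 + \<rho>)" using False y by simp
    also have "\<dots> \<le> b * 5" using \<open>\<rho> \<le> 5/4\<close> \<open>0 \<le> b\<close> by (intro mult_left_mono) auto
    finally have "B \<le> b" by simp
    then have "0 < b" using \<open>0 < B\<close> by linarith
    from \<open>B \<le> b\<close> have "d \<le> b" "8 * K + 4 * W \<le> b * t" "K \<le> 3/4 * b"
      using \<open>0 < t\<close> by (auto simp: B_def pos_divide_le_eq)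
    then have "2 * K + W \<le> b * t / 4" by simp
    have "b * \<rho> \<le> b * (5/4)" using \<open>\<rho> \<le> 5/4\<close> \<open>0 < b\<close> by (intro mult_left_mono) auto
    then have "b * (1 + \<rho>) + K \<le> 3 * b" using \<open>K \<le> 3/4 * b\<close> by (simp add: algebra_simps)
    moreover have "s * L * c \<le> t / 12" using assms(11) by simp
    ultimately have "s * L * c * (b * (1 + \<rho>) + K) \<le> t / 12 * (3 * b)"
      using \<open>0 \<le> \<rho>\<close> \<open>0 < b\<close> \<open>0 \<le> K\<close> \<open>0 \<le> s\<close> \<open>0 < L\<close> \<open>0 < c\<close> \<open>0 < t\<close>
      by (intro mult_mono) auto
    then have "s * L * c * (b * (1 + \<rho>) + K) \<le> b * t / 4" by simp
    with lifting_constant_fork[OF assms(1) affine \<open>0 < L\<close> lift \<open>0 < c\<close> \<open>0 \<le> K\<close> x \<open>0 < t\<close>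
          \<open>0 < e\<close> \<rho> y \<open>0 < b\<close> \<open>d \<le> b\<close> \<open>2 * K + W \<le> b * t / 4\<close>]
    obtain a where "a \<in> S" "dist y (f a) \<le> K"
      and a_x: "dist a x \<le> c * (b * (1 + \<rho>) + K) * (3 - 2 * beta_bar TYPE('a) s + 2 * e)"
      by blast
    moreover have "c * (b * (1 + \<rho>) + K) * (3 - 2 * beta_bar TYPE('a) s + 2 * e)
        \<le> c * (1 - \<mu>) * dist y (f x) + c * (3 * K)"
      unfolding y using \<open>e \<le> beta_bar TYPE('a) s\<close> \<open>0 \<le> K\<close>
      by (intro fork_cost_le[OF \<open>0 < c\<close> \<open>0 < b\<close> _ _ contract]) auto
    moreover have "c * (3 * K) \<le> c * (3 * K + 5 * B)" using \<open>0 < c\<close> \<open>0 < B\<close> by simp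
    ultimately have "dist a x \<le> c * (1 - \<mu>) * dist y (f x) + c * (3 * K + 5 * B)"
      using a_x by linarith
    with \<open>a \<in> S\<close> \<open>dist y (f a) \<le> K\<close> show ?thesis by blast
  qed
  then show ?thesis by blast
qed

lemma real_of_ereal_pos_eq: "0 < real_of_ereal x \<Longrightarrow> x = ereal (real_of_ereal x)"
  by (cases x) auto

lemma beta_bar_le_rho_bar:
  fixes f :: "'a::real_normed_vector \<Rightarrow> 'b::real_normed_vector"
  assumes "infinite_dimensional TYPE('b)" "0 \<le> K" "coarsely_continuous f S"
    and L: "Lip_inf f S = ereal L" "0 < L" and c: "c_inf f S K = ereal c" "0 < c"
    and "0 < t" "t \<le> 1"
  shows "beta_bar TYPE('a) (t / (48 * L * c)) \<le> rho_bar TYPE('b) t"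
proof (rule ccontr)
  define s where "s = t / (48 * L * c)"
  define \<rho>0 where "\<rho>0 = rho_bar TYPE('b) t"
  assume "\<not> ?thesis"
  then have "\<rho>0 < beta_bar TYPE('a) s" by (simp add: \<rho>0_def s_def)
  have "0 \<le> \<rho>0" "\<rho>0 \<le> t" unfolding \<rho>0_def using rho_bar_bounds[OF assms(1,8)] by auto
  define e where "e = min ((beta_bar TYPE('a) s - \<rho>0) / 4) (1/4)"
  define \<rho> where "\<rho> = \<rho>0 + e"
  define \<mu> where "\<mu> = 4 * e / (3 + \<rho>)"
  have "0 < e" "e \<le> 1/4" "e \<le> (beta_bar TYPE('a) s - \<rho>0) / 4"
    using \<open>\<rho>0 < beta_bar TYPE('a) s\<close> by (auto simp: e_def min_def)
  then have "4 * e \<le> beta_bar TYPE('a) s - \<rho>0" by simp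
  then have "0 \<le> \<rho>" "\<rho> \<le> 5/4" "e \<le> beta_bar TYPE('a) s"
    using \<open>0 < e\<close> \<open>e \<le> 1/4\<close> \<open>0 \<le> \<rho>0\<close> \<open>\<rho>0 \<le> t\<close> \<open>t \<le> 1\<close> by (auto simp: \<rho>_def)
  have "0 < \<mu>" "\<mu> \<le> 1" "(3 + \<rho>) * (1 - \<mu>) = 3 + \<rho>0 - 3 * e"
    using \<open>0 < e\<close> \<open>e \<le> 1/4\<close> \<open>0 \<le> \<rho>\<close> by (auto simp: \<mu>_def \<rho>_def field_simps)
  have contract: "(1 + \<rho>) * (3 - 2 * beta_bar TYPE('a) s + 2 * e) \<le> (3 + \<rho>) * (1 - \<mu>)"
    using fork_gain[OF \<open>0 \<le> \<rho>0\<close> \<open>0 < e\<close> \<open>4 * e \<le> beta_bar TYPE('a) s - \<rho>0\<close>]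
      \<open>(3 + \<rho>) * (1 - \<mu>) = 3 + \<rho>0 - 3 * e\<close> by (simp add: \<rho>_def)
  have "Lip_inf f S < ereal (2 * L)" "0 \<le> 2 * L" using L by simp_all
  then obtain W where affine: "\<forall>a\<in>S. \<forall>b\<in>S. dist (f a) (f b) \<le> 2 * L * dist a b + W"
    by (rule Lip_inf_affine_bound[OF assms(3)])
  have "c_inf f S K < ereal (c * (1 + \<mu> / 4))" using c \<open>0 < \<mu>\<close> by simp
  then obtain d c' where "K < d" "0 < c'" "c' < c * (1 + \<mu> / 4)" and lift: "lifting_constant f S K d c'"
    by (rule c_inf_less_imp_lifting_constant)
  have "12 * s * (2 * L) * c' \<le> t"
  proof -
    have "12 * s * (2 * L) * c' = t * (c' / (2 * c))" using L c by (simp add: s_def field_simps)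
    also have "\<dots> \<le> t"
    proof -
      have "c * (1 + \<mu> / 4) \<le> 2 * c" using \<open>\<mu> \<le> 1\<close> \<open>0 < c\<close> by (simp add: algebra_simps)
      then have "c' \<le> 2 * c" using \<open>c' < c * (1 + \<mu> / 4)\<close> by linarith
      then show ?thesis using \<open>0 < c\<close> \<open>0 < t\<close> by (intro mult_left_le) (simp_all add: field_simps)
    qed
    finally show ?thesis .
  qed
  moreover have "0 < 2 * L" "0 \<le> s" "\<rho> = rho_bar TYPE('b) t + e"
    using L c \<open>0 < t\<close> by (simp_all add: s_def \<rho>_def \<rho>0_def)
  ultimately have "\<exists>B. \<forall>x\<in>S. \<forall>y. \<exists>a\<in>S. dist y (f a) \<le> K \<and> dist a x \<le> c' * (1 - \<mu>) * dist y (f x) + B"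
    using lifting_constant_affine_improvement[OF assms(1) affine _ lift \<open>0 < c'\<close> \<open>0 \<le> K\<close> \<open>K < d\<close>
        \<open>0 < t\<close> \<open>0 < e\<close> _ _ _ \<open>\<rho> \<le> 5/4\<close> \<open>e \<le> beta_bar TYPE('a) s\<close> contract \<open>\<mu> \<le> 1\<close>]
    by blast
  then obtain B where "\<forall>x\<in>S. \<forall>y. \<exists>a\<in>S. dist y (f a) \<le> K \<and> dist a x \<le> c' * (1 - \<mu>) * dist y (f x) + B"
    by blast
  moreover have "0 \<le> c' * (1 - \<mu>)" "c' * (1 - \<mu>) < c' * (1 - \<mu> / 2)"
    using \<open>0 < c'\<close> \<open>0 < \<mu>\<close> \<open>\<mu> \<le> 1\<close> by simp_all
  ultimately obtain d' where "K < d'" "lifting_constant f S K d' (c' * (1 - \<mu> / 2))"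
    by (rule lifting_constant_of_affine_lifting)
  moreover have "0 < c' * (1 - \<mu> / 2)" using \<open>0 < c'\<close> \<open>\<mu> \<le> 1\<close> by simp
  ultimately have "c_inf f S K \<le> ereal (c' * (1 - \<mu> / 2))" by (intro lifting_constant_imp_c_inf_le)
  then have "c \<le> c' * (1 - \<mu> / 2)" using c by simp
  also have "\<dots> < c * (1 + \<mu> / 4) * (1 - \<mu> / 2)"
    using \<open>c' < c * (1 + \<mu> / 4)\<close> \<open>\<mu> \<le> 1\<close> by (intro mult_strict_right_mono) auto
  also have "\<dots> = c * (1 - \<mu> / 4 - \<mu> * \<mu> / 8)" by (simp add: field_simps)
  also have "\<dots> \<le> c"
  proof (rule mult_left_le)
    have "0 \<le> \<mu> * \<mu>" by simp
    then show "1 - \<mu> / 4 - \<mu> * \<mu> / 8 \<le> 1" using \<open>0 < \<mu>\<close> by linarith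
  qed (use \<open>0 < c\<close> in simp)
  finally show False by simp
qed

theorem theorem3p2:
  fixes f :: "'a::banach \<Rightarrow> 'b::banach" and S :: "'a set" and K t :: real
  assumes "infinite_dimensional TYPE('a)" and "infinite_dimensional TYPE('b)"
    and "K \<ge> 0"
    and "coarse_quotient f S K" and "coarse_lipschitz f S"
    and "0 < t" and "t \<le> 1"
  shows "beta_bar TYPE('a) (t / (48 * real_of_ereal (Lip_inf f S) * real_of_ereal (c_inf f S K)))
           \<le> 3/2 * rho_bar TYPE('b) t"
proof -
  define L where "L = real_of_ereal (Lip_inf f S)"
  define c where "c = real_of_ereal (c_inf f S K)"
  \<comment> \<open>If \<open>L\<close> or \<open>c\<close> is not positive (\<open>real_of_ereal \<infinity> = 0\<close>), the argument of \<open>beta_bar\<close> is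
    \<open>\<le> 0\<close> and the claim is trivial.\<close>
  have "0 \<le> rho_bar TYPE('b) t" using rho_bar_bounds(2)[OF assms(2,6)] .
  moreover have "beta_bar TYPE('a) (t / (48 * L * c)) \<le> rho_bar TYPE('b) t"
  proof (cases "0 < L \<and> 0 < c")
    case True
    then have "Lip_inf f S = ereal L" "c_inf f S K = ereal c"
      unfolding L_def c_def by (auto intro: real_of_ereal_pos_eq)
    moreover have "coarsely_continuous f S" using assms(4) unfolding coarse_quotient_def by blast
    ultimately show ?thesis using beta_bar_le_rho_bar assms(2,3,6,7) True by blast
  next
    case False
    have "0 \<le> c" unfolding c_def using c_inf_nonneg[of f S K] by (simp add: real_of_ereal_pos)
    with False have "t / (48 * L * c) \<le> 0"
      using \<open>0 < t\<close> by (auto simp: divide_nonneg_nonpos mult_nonpos_nonneg not_less)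
    then show ?thesis using beta_bar_nonpos[OF assms(1)] \<open>0 \<le> rho_bar TYPE('b) t\<close> by (meson order_trans)
  qed
  ultimately show ?thesis unfolding L_def c_def by linarith
qed

end
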